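(* Let $G$ be an additive group and let $(X,\rho)$ be the $\mathbb R$-tree described below. Then $X$ is similarity homogeneous and not homogeneous. Moreover $X$ is a metric fibration with fibers $F_a=\{(f,a)\in X\}$, $a>0$.
   Context: A function on an interval $(\alpha,\beta)$ is piecewise constant from the left if for every $x$ there is $\varepsilon>0$ with $f$ constant on $[x-\varepsilon,x]$. $X$ is the set of pairs $(f,a_f)$, $a_f>0$ real, $f:(a_f,+\infty)\to G$ piecewise constant from the left with $f|_{(b_f,+\infty)}\equiv0$ for some $b_f\ge a_f$. Order: $(f,a_f)\preceq(g,a_g)$ iff $a_f\le a_g$ and $f|_{(a_g,+\infty)}=g$; any two elements $p,q$ have a supremum $p\vee q$. Metric: $\rho((f,a_f),(g,a_g))=|a_f-a_g|$ if the pairs are comparable, and $\rho(p,q)=\rho(p,p\vee q)+\rho(p\vee q,q)$ otherwise. A similarity with coefficient $k>0$ is a map with $\rho(F(x),F(y))=k\rho(x,y)$; $X$ is similarity homogeneous (resp. homogeneous) if its group of bijective similarities (resp. isometries) acts transitively. Two subsets $F_1,F_2$ are equidistant if for every $x_i\in F_i$ there is $x_j\in F_j$ ($j\ne i$) with $\rho(x_i,x_j)$ equal to the distance between $F_1$ and $F_2$. A metric fibration of $X$ is a partition of $X$ into closed subsets that are mutually isometric (with the induced metric) and pairwise equidistant. *)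

theory Defs
  imports "HOL-Analysis.Analysis" "HOL-Library.Disjoint_Sets"
begin

text \<open>A point of X is a pair (f, a) with a > 0 and f : (a, +inf) -> G.
  Since HOL functions are total, f is represented by a total function
  real => 'g normalised to be 0 outside the domain (a, +inf), i.e. on (-inf, a].\<close>

type_synonym 'g pt = "(real \<Rightarrow> 'g) \<times> real"

definition pc_left :: "real \<Rightarrow> (real \<Rightarrow> 'g) \<Rightarrow> bool" where
  "pc_left a f \<longleftrightarrow> (\<forall>x>a. \<exists>\<epsilon>>0. \<forall>y. a < y \<and> x - \<epsilon> \<le> y \<and> y \<le> x \<longrightarrow> f y = f x)"

definition Xset :: "('g::ab_group_add) pt set" where
  "Xset = {(f, a). 0 < a \<and> pc_left a f \<and> (\<exists>b\<ge>a. \<forall>x>b. f x = 0) \<and> (\<forall>x\<le>a. f x = 0)}"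

definition tle :: "('g::ab_group_add) pt \<Rightarrow> 'g pt \<Rightarrow> bool" where
  "tle p q \<longleftrightarrow> snd p \<le> snd q \<and> (\<forall>x>snd q. fst p x = fst q x)"

definition tsup :: "('g::ab_group_add) pt \<Rightarrow> 'g pt \<Rightarrow> 'g pt" where
  "tsup p q = (THE s. s \<in> Xset \<and> tle p s \<and> tle q s \<and>
                  (\<forall>t\<in>Xset. tle p t \<and> tle q t \<longrightarrow> tle s t))"

definition rho :: "('g::ab_group_add) pt \<Rightarrow> 'g pt \<Rightarrow> real" where
  "rho p q = (if tle p q \<or> tle q p then \<bar>snd p - snd q\<bar>
              else \<bar>snd p - snd (tsup p q)\<bar> + \<bar>snd (tsup p q) - snd q\<bar>)"

definition similarity_homogeneous :: "'a set \<Rightarrow> ('a \<Rightarrow> 'a \<Rightarrow> real) \<Rightarrow> bool" where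
  "similarity_homogeneous M d \<longleftrightarrow>
     (\<forall>p\<in>M. \<forall>q\<in>M. \<exists>F k. k > 0 \<and> bij_betw F M M \<and>
        (\<forall>x\<in>M. \<forall>y\<in>M. d (F x) (F y) = k * d x y) \<and> F p = q)"

definition homogeneous :: "'a set \<Rightarrow> ('a \<Rightarrow> 'a \<Rightarrow> real) \<Rightarrow> bool" where
  "homogeneous M d \<longleftrightarrow>
     (\<forall>p\<in>M. \<forall>q\<in>M. \<exists>F. bij_betw F M M \<and>
        (\<forall>x\<in>M. \<forall>y\<in>M. d (F x) (F y) = d x y) \<and> F p = q)"

definition isometric_sets :: "('a \<Rightarrow> 'a \<Rightarrow> real) \<Rightarrow> 'a set \<Rightarrow> 'a set \<Rightarrow> bool" where
  "isometric_sets d A B \<longleftrightarrow>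
     (\<exists>\<phi>. bij_betw \<phi> A B \<and> (\<forall>x\<in>A. \<forall>y\<in>A. d (\<phi> x) (\<phi> y) = d x y))"

definition set_dist :: "('a \<Rightarrow> 'a \<Rightarrow> real) \<Rightarrow> 'a set \<Rightarrow> 'a set \<Rightarrow> real" where
  "set_dist d A B = Inf {d x y | x y. x \<in> A \<and> y \<in> B}"

definition equidistant :: "('a \<Rightarrow> 'a \<Rightarrow> real) \<Rightarrow> 'a set \<Rightarrow> 'a set \<Rightarrow> bool" where
  "equidistant d A B \<longleftrightarrow>
     (\<forall>x\<in>A. \<exists>y\<in>B. d x y = set_dist d A B) \<and> (\<forall>y\<in>B. \<exists>x\<in>A. d y x = set_dist d A B)"

definition metric_fibration :: "'a set \<Rightarrow> ('a \<Rightarrow> 'a \<Rightarrow> real) \<Rightarrow> 'a set set \<Rightarrow> bool" where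
  "metric_fibration M d P \<longleftrightarrow>
     partition_on M P \<and>
     (\<forall>F\<in>P. closedin (Metric_space.mtopology M d) F) \<and>
     (\<forall>F1\<in>P. \<forall>F2\<in>P. isometric_sets d F1 F2) \<and>
     (\<forall>F1\<in>P. \<forall>F2\<in>P. F1 \<noteq> F2 \<longrightarrow> equidistant d F1 F2)"

end

theory Submission
  imports Defs
begin

text \<open>Two points \<open>p, q\<close> of \<open>X\<close> have a supremum at the level \<open>c\<close> where their functions
  start to agree, and \<open>\<rho>(p, q) = 2 c - a\<^sub>p - a\<^sub>q\<close>. Hence a map that preserves the order,
  changes levels by \<open>a \<mapsto> k a + t\<close> and has an upward closed image multiplies \<open>\<rho>\<close> by \<open>k\<close>.
  Reparametrising the real line by \<open>x \<mapsto> k x + t\<close> and adding a fixed function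
  (eventually zero and locally constant from the left) are such maps; composing them sends any
  point to any other, and shifting levels by \<open>t\<close> maps the fibre \<open>F\<^sub>a\<close> isometrically onto
  \<open>F\<^sub>a\<^sub>+\<^sub>t\<close>. Since \<open>\<bar>a\<^sub>p - a\<^sub>q\<bar> \<le> \<rho>(p, q)\<close> with equality for comparable points, the fibres
  are closed and equidistant. Finally \<open>X\<close> is not homogeneous: below a point of level \<open>a\<close> there
  is room of length only \<open>a\<close>, so no geodesic of length 6 has its midpoint at level 2, whereas
  the zero functions at levels 1, 4, 7 form one with midpoint at level 4.\<close>

definition left_locally_constant :: "(real \<Rightarrow> 'a) \<Rightarrow> bool" where
  "left_locally_constant f \<longleftrightarrow> (\<forall>x. \<forall>\<^sub>F y in at_left x. f y = f x)"

lemma pc_left_iff_eventually: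
  "pc_left a f \<longleftrightarrow> (\<forall>x>a. \<forall>\<^sub>F y in at_left x. f y = f x)"
  unfolding pc_left_def
proof (intro iffI allI impI)
  fix x assume "\<forall>x>a. \<exists>e>0. \<forall>y. a < y \<and> x - e \<le> y \<and> y \<le> x \<longrightarrow> f y = f x" "a < x"
  then obtain e where "e > 0" and e: "\<forall>y. a < y \<and> x - e \<le> y \<and> y \<le> x \<longrightarrow> f y = f x"
    by blast
  have "\<forall>y>max a (x - e). y < x \<longrightarrow> f y = f x"
  proof (intro allI impI)
    fix y assume "max a (x - e) < y" "y < x"
    then show "f y = f x"
      by (intro e[rule_format]) auto
  qed
  moreover have "max a (x - e) < x"
    using \<open>e > 0\<close> \<open>a < x\<close> by simp
  ultimately show "\<forall>\<^sub>F y in at_left x. f y = f x"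
    unfolding eventually_at_left_field by blast
next
  fix x assume "\<forall>x>a. \<forall>\<^sub>F y in at_left x. f y = f x" "a < x"
  then obtain b where "b < x" and b: "\<forall>y>b. y < x \<longrightarrow> f y = f x"
    unfolding eventually_at_left_field by blast
  have "\<forall>y. a < y \<and> x - (x - b) / 2 \<le> y \<and> y \<le> x \<longrightarrow> f y = f x"
  proof (intro allI impI)
    fix y assume y: "a < y \<and> x - (x - b) / 2 \<le> y \<and> y \<le> x"
    then have "b < y"
      using \<open>b < x\<close> by (simp add: field_simps)
    show "f y = f x"
    proof (cases "y = x")
      case False
      then have "y < x"
        using y by simp
      then show ?thesis
        using b \<open>b < y\<close> by blast
    qed simp
  qed
  moreover have "0 < (x - b) / 2"
    using \<open>b < x\<close> by simp
  ultimately show "\<exists>e>0. \<forall>y. a < y \<and> x - e \<le> y \<and> y \<le> x \<longrightarrow> f y = f x"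
    by blast
qed

lemma Xset_iff:
  "(f, a) \<in> Xset \<longleftrightarrow>
     0 < a \<and> (\<forall>x\<le>a. f x = 0) \<and> left_locally_constant f \<and> (\<forall>\<^sub>F x in at_top. f x = 0)"
proof -
  have llc_iff: "left_locally_constant f \<longleftrightarrow> (\<forall>x>a. \<forall>\<^sub>F y in at_left x. f y = f x)"
    if zero: "\<forall>x\<le>a. f x = 0"
    unfolding left_locally_constant_def
  proof (intro iffI allI)
    fix x assume right: "\<forall>x>a. \<forall>\<^sub>F y in at_left x. f y = f x"
    have "\<forall>\<^sub>F y in at_left x. f y = f x" if "x \<le> a"
      using zero that unfolding eventually_at_left_field by (intro exI[of _ "x - 1"]) auto
    then show "\<forall>\<^sub>F y in at_left x. f y = f x"
      using right by (cases "a < x") auto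
  qed auto
  have eventually_zero: "(\<exists>b\<ge>a. \<forall>x>b. f x = 0) \<longleftrightarrow> (\<forall>\<^sub>F x in at_top. f x = 0)"
    unfolding eventually_at_top_dense
  proof
    assume "\<exists>N. \<forall>x>N. f x = 0"
    then obtain N where "\<forall>x>N. f x = 0" by blast
    then show "\<exists>b\<ge>a. \<forall>x>b. f x = 0" by (intro exI[of _ "max a N"]) auto
  qed blast
  have "(f, a) \<in> Xset \<longleftrightarrow>
      0 < a \<and> pc_left a f \<and> (\<exists>b\<ge>a. \<forall>x>b. f x = 0) \<and> (\<forall>x\<le>a. f x = 0)"
    by (simp add: Xset_def)
  then show ?thesis
    using llc_iff eventually_zero pc_left_iff_eventually[of a f] by blast
qed

lemma
  assumes "p \<in> Xset"
  shows Xset_snd_pos: "0 < snd p"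
    and Xset_zero_below: "x \<le> snd p \<Longrightarrow> fst p x = 0"
    and Xset_left_locally_constant: "left_locally_constant (fst p)"
    and Xset_eventually_zero: "\<forall>\<^sub>F x in at_top. fst p x = 0"
  using assms Xset_iff[of "fst p" "snd p"] by auto

lemma left_locally_constant_combine:
  assumes "left_locally_constant f" "left_locally_constant g"
  shows "left_locally_constant (\<lambda>x. h (f x) (g x))"
  unfolding left_locally_constant_def
proof
  fix x
  have "\<forall>\<^sub>F y in at_left x. f y = f x" "\<forall>\<^sub>F y in at_left x. g y = g x"
    using assms unfolding left_locally_constant_def by auto
  then show "\<forall>\<^sub>F y in at_left x. h (f y) (g y) = h (f x) (g x)"
    by eventually_elim simp
qed

lemma left_locally_constant_truncate:
  assumes "left_locally_constant f"
  shows "left_locally_constant (\<lambda>x. if b < x then f x else 0)"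
  unfolding left_locally_constant_def
proof
  fix x
  show "\<forall>\<^sub>F y in at_left x. (if b < y then f y else 0) = (if b < x then f x else 0)"
  proof (cases "b < x")
    case True
    have "\<forall>\<^sub>F y in at_left x. b < y" "\<forall>\<^sub>F y in at_left x. f y = f x"
      using eventually_at_left_real[OF True] assms unfolding left_locally_constant_def
      by (auto elim: eventually_mono)
    then show ?thesis
      by eventually_elim (use True in simp)
  next
    case False
    have "\<forall>\<^sub>F y in at_left x. y < x"
      unfolding eventually_at_left_field by (intro exI[of _ "x - 1"]) auto
    then show ?thesis
      by eventually_elim (use False in simp)
  qed
qed

lemma left_locally_constant_affine:
  assumes "left_locally_constant f" "k > 0"
  shows "left_locally_constant (\<lambda>x. f ((x - t) / k))"
  unfolding left_locally_constant_def
proof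
  fix x
  obtain b where "b < (x - t) / k" and b: "\<forall>y>b. y < (x - t) / k \<longrightarrow> f y = f ((x - t) / k)"
    using assms(1) unfolding left_locally_constant_def eventually_at_left_field by blast
  have "\<forall>y>k * b + t. y < x \<longrightarrow> f ((y - t) / k) = f ((x - t) / k)"
  proof (intro allI impI)
    fix y assume "k * b + t < y" "y < x"
    then have "b < (y - t) / k" "(y - t) / k < (x - t) / k"
      using \<open>k > 0\<close> by (simp_all add: field_simps)
    then show "f ((y - t) / k) = f ((x - t) / k)"
      using b by blast
  qed
  moreover have "k * b + t < x"
    using \<open>b < (x - t) / k\<close> \<open>k > 0\<close> by (simp add: field_simps)
  ultimately show "\<forall>\<^sub>F y in at_left x. f ((y - t) / k) = f ((x - t) / k)"
    unfolding eventually_at_left_field by blast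
qed

lemma eventually_zero_affine:
  fixes f :: "real \<Rightarrow> 'a::zero"
  assumes "\<forall>\<^sub>F x in at_top. f x = 0" "k > 0"
  shows "\<forall>\<^sub>F x in at_top. f ((x - t) / k) = 0"
proof -
  obtain N where N: "\<forall>x\<ge>N. f x = 0"
    using assms(1) unfolding eventually_at_top_linorder by blast
  have "\<forall>x\<ge>k * N + t. f ((x - t) / k) = 0"
    using N \<open>k > 0\<close> by (auto simp: field_simps)
  then show ?thesis unfolding eventually_at_top_linorder by blast
qed

lemma tle_refl: "tle p p"
  by (simp add: tle_def)

lemma tle_trans: "tle p q \<Longrightarrow> tle q r \<Longrightarrow> tle p r"
  unfolding tle_def by force

lemma tle_antisym:
  assumes "p \<in> Xset" "q \<in> Xset" "tle p q" "tle q p"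
  shows "p = q"
proof -
  obtain f a g b where p: "p = (f, a)" and q: "q = (g, b)"
    by (cases p, cases q)
  have "a = b"
    using assms(3,4) by (simp add: p q tle_def)
  have "f x = g x" for x
  proof (cases "a < x")
    case True
    then show ?thesis using assms(3) \<open>a = b\<close> by (simp add: p q tle_def)
  next
    case False
    then show ?thesis using assms(1,2) \<open>a = b\<close> by (simp add: p q Xset_iff)
  qed
  then show ?thesis
    using \<open>a = b\<close> p q by auto
qed

lemma tle_snd_le: "tle p q \<Longrightarrow> snd p \<le> snd q"
  by (simp add: tle_def)

lemma tle_of_common_lower_bound:
  "tle p q \<Longrightarrow> tle p r \<Longrightarrow> snd q \<le> snd r \<Longrightarrow> tle q r"
  unfolding tle_def by force

definition at_level :: "real \<Rightarrow> ('g::zero) pt \<Rightarrow> 'g pt" where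
  "at_level b p = ((\<lambda>x. if b < x then fst p x else 0), b)"

lemma snd_at_level [simp]: "snd (at_level b p) = b"
  by (simp add: at_level_def)

lemma at_level_in_Xset:
  assumes "p \<in> Xset" "0 < b"
  shows "at_level b p \<in> Xset"
proof -
  have "left_locally_constant (\<lambda>x. if b < x then fst p x else 0)"
    using Xset_left_locally_constant[OF assms(1)] by (rule left_locally_constant_truncate)
  moreover have "\<forall>\<^sub>F x in at_top. (if b < x then fst p x else 0) = 0"
    using Xset_eventually_zero[OF assms(1)] by eventually_elim simp
  ultimately show ?thesis
    using \<open>0 < b\<close> by (simp add: at_level_def Xset_iff)
qed

lemma tle_at_level: "snd p \<le> b \<Longrightarrow> tle p (at_level b p)"
  by (simp add: tle_def at_level_def)

lemma at_level_tle: "b \<le> snd p \<Longrightarrow> tle (at_level b p) p"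
  by (simp add: tle_def at_level_def)

lemma rho_comparable: "tle p q \<or> tle q p \<Longrightarrow> rho p q = \<bar>snd p - snd q\<bar>"
  by (simp add: rho_def)

lemma rho_at_level: "rho p (at_level b p) = \<bar>snd p - b\<bar>"
  using tle_at_level[of p b] at_level_tle[of b p] by (cases "snd p \<le> b") (simp_all add: rho_comparable)

definition is_sup :: "('g::ab_group_add) pt \<Rightarrow> 'g pt \<Rightarrow> 'g pt \<Rightarrow> bool" where
  "is_sup p q s \<longleftrightarrow> s \<in> Xset \<and> tle p s \<and> tle q s \<and> (\<forall>t\<in>Xset. tle p t \<and> tle q t \<longrightarrow> tle s t)"

lemma is_sup_exists:
  assumes "p \<in> Xset" "q \<in> Xset"
  shows "\<exists>s. is_sup p q s"
proof -
  define C where "C = {c. max (snd p) (snd q) \<le> c \<and> (\<forall>x>c. fst p x = fst q x)}"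
  define c0 where "c0 = Inf C"
  have "\<forall>\<^sub>F x in at_top. fst p x = 0 \<and> fst q x = 0"
    using Xset_eventually_zero[OF assms(1)] Xset_eventually_zero[OF assms(2)] by (rule eventually_conj)
  then obtain N where N: "\<forall>x\<ge>N. fst p x = 0 \<and> fst q x = 0"
    unfolding eventually_at_top_linorder by blast
  have "max (max (snd p) (snd q)) N \<in> C"
    using N by (auto simp: C_def)
  then have "C \<noteq> {}" by blast
  have "bdd_below C"
    by (rule bdd_belowI[of _ "max (snd p) (snd q)"]) (simp add: C_def)
  have c0_ge: "max (snd p) (snd q) \<le> c0"
    unfolding c0_def using \<open>C \<noteq> {}\<close> by (rule cInf_greatest) (simp add: C_def)
  have c0_agree: "fst p x = fst q x" if "c0 < x" for x
  proof -
    have "\<exists>c\<in>C. c < x"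
      using cInf_less_iff[OF \<open>C \<noteq> {}\<close> \<open>bdd_below C\<close>] that by (simp add: c0_def)
    then obtain c where "c \<in> C" "c < x" ..
    then show ?thesis
      unfolding C_def by blast
  qed
  let ?s = "at_level c0 p"
  have "is_sup p q ?s"
    unfolding is_sup_def
  proof (intro conjI ballI impI)
    show "?s \<in> Xset"
      using at_level_in_Xset[OF assms(1)] c0_ge Xset_snd_pos[OF assms(1)] by simp
    show "tle p ?s"
      using c0_ge by (simp add: tle_at_level)
    show "tle q ?s"
      using c0_ge c0_agree by (simp add: tle_def at_level_def)
    fix t assume "t \<in> Xset" "tle p t \<and> tle q t"
    then have "snd t \<in> C"
      by (auto simp: C_def tle_def)
    then have "c0 \<le> snd t"
      unfolding c0_def using \<open>bdd_below C\<close> by (rule cInf_lower)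
    then show "tle ?s t"
      using \<open>tle p t \<and> tle q t\<close> by (simp add: tle_def at_level_def)
  qed
  then show ?thesis ..
qed

lemma is_sup_unique: "is_sup p q s \<Longrightarrow> is_sup p q s' \<Longrightarrow> s = s'"
  unfolding is_sup_def by (meson tle_antisym)

lemma tsup_eq_iff_is_sup:
  assumes "p \<in> Xset" "q \<in> Xset"
  shows "tsup p q = s \<longleftrightarrow> is_sup p q s"
proof -
  have "\<exists>!s. is_sup p q s"
    using is_sup_exists[OF assms] is_sup_unique by blast
  then have "is_sup p q (tsup p q)"
    unfolding tsup_def is_sup_def[symmetric] by (rule theI')
  then show ?thesis
    using is_sup_unique by blast
qed

lemma tsup_commute: "tsup p q = tsup q p"
  unfolding tsup_def by (metis (no_types, lifting))

lemma
  assumes "p \<in> Xset" "q \<in> Xset"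
  shows tsup_in_Xset: "tsup p q \<in> Xset"
    and tle_tsup1: "tle p (tsup p q)"
    and tle_tsup2: "tle q (tsup p q)"
    and tsup_least: "t \<in> Xset \<Longrightarrow> tle p t \<Longrightarrow> tle q t \<Longrightarrow> tle (tsup p q) t"
  using tsup_eq_iff_is_sup[OF assms, of "tsup p q"] unfolding is_sup_def by auto

lemma rho_eq_tsup:
  assumes "p \<in> Xset" "q \<in> Xset"
  shows "rho p q = 2 * snd (tsup p q) - snd p - snd q"
proof -
  have "snd p \<le> snd (tsup p q)" "snd q \<le> snd (tsup p q)"
    using tle_tsup1[OF assms] tle_tsup2[OF assms] by (simp_all add: tle_snd_le)
  moreover have "tsup p q = q" if "tle p q"
    using that assms tle_refl by (simp add: tsup_eq_iff_is_sup is_sup_def)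
  moreover have "tsup p q = p" if "tle q p"
    using that assms tle_refl by (simp add: tsup_eq_iff_is_sup is_sup_def)
  ultimately show ?thesis
    by (auto simp: rho_def)
qed

lemma abs_snd_diff_le_rho:
  assumes "p \<in> Xset" "q \<in> Xset"
  shows "\<bar>snd p - snd q\<bar> \<le> rho p q"
  using rho_eq_tsup[OF assms] tle_snd_le[OF tle_tsup1[OF assms]] tle_snd_le[OF tle_tsup2[OF assms]]
  by linarith

lemma rho_le_common_upper_bound:
  assumes "p \<in> Xset" "q \<in> Xset" "t \<in> Xset" "tle p t" "tle q t"
  shows "rho p q \<le> 2 * snd t - snd p - snd q"
  using rho_eq_tsup[OF assms(1,2)] tle_snd_le[OF tsup_least[OF assms]] by linarith

lemma rho_commute: "rho p q = rho q p"
  unfolding rho_def tsup_commute[of p q] by (auto simp: abs_minus_commute)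

lemma Metric_space_rho: "Metric_space (Xset :: ('g::ab_group_add) pt set) rho"
proof
  fix p q :: "'g pt"
  show "0 \<le> rho p q"
    by (simp add: rho_def)
  show "rho p q = rho q p"
    by (rule rho_commute)
  assume p: "p \<in> Xset" and q: "q \<in> Xset"
  show "rho p q = 0 \<longleftrightarrow> p = q"
  proof
    assume "rho p q = 0"
    let ?s = "tsup p q"
    have "snd p = snd ?s" "snd q = snd ?s"
      using \<open>rho p q = 0\<close> rho_eq_tsup[OF p q]
        tle_snd_le[OF tle_tsup1[OF p q]] tle_snd_le[OF tle_tsup2[OF p q]] by linarith+
    then have "tle ?s p" "tle ?s q"
      using tle_tsup1[OF p q] tle_tsup2[OF p q] by (simp_all add: tle_def)
    then show "p = q"
      using tle_antisym tsup_in_Xset tle_tsup1 tle_tsup2 p q by metis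
  qed (simp add: rho_def tle_refl)
next
  fix p q r :: "'g pt"
  assume p: "p \<in> Xset" and q: "q \<in> Xset" and r: "r \<in> Xset"
  let ?a = "tsup p q" and ?b = "tsup q r"
  obtain m where "m \<in> Xset" "tle p m" "tle r m" "snd m = max (snd ?a) (snd ?b)"
  proof (cases "snd ?a \<le> snd ?b")
    case True
    then have "tle ?a ?b"
      by (rule tle_of_common_lower_bound[OF tle_tsup2[OF p q] tle_tsup1[OF q r]])
    then show ?thesis
      using that[of ?b] True tsup_in_Xset[OF q r] tle_trans[OF tle_tsup1[OF p q]] tle_tsup2[OF q r]
      by simp
  next
    case False
    then have "tle ?b ?a"
      by (intro tle_of_common_lower_bound[OF tle_tsup1[OF q r] tle_tsup2[OF p q]]) simp
    then show ?thesis
      using that[of ?a] False tsup_in_Xset[OF p q] tle_trans[OF tle_tsup2[OF q r]] tle_tsup1[OF p q]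
      by simp
  qed
  then have "rho p r \<le> 2 * snd m - snd p - snd r"
    using rho_le_common_upper_bound[OF p r] by blast
  then show "rho p r \<le> rho p q + rho q r"
    using \<open>snd m = max (snd ?a) (snd ?b)\<close> rho_eq_tsup[OF p q] rho_eq_tsup[OF q r]
      tle_snd_le[OF tle_tsup2[OF p q]] tle_snd_le[OF tle_tsup1[OF q r]] by linarith
qed

lemma rho_image_of_order_embedding:
  assumes S: "S \<subseteq> Xset" "\<And>x w. x \<in> S \<Longrightarrow> w \<in> Xset \<Longrightarrow> tle x w \<Longrightarrow> w \<in> S"
    and F: "F ` S \<subseteq> Xset" "\<And>x w. x \<in> S \<Longrightarrow> w \<in> Xset \<Longrightarrow> tle (F x) w \<Longrightarrow> w \<in> F ` S"
    and order: "\<And>x y. x \<in> S \<Longrightarrow> y \<in> S \<Longrightarrow> tle (F x) (F y) \<longleftrightarrow> tle x y"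
    and level: "\<And>x. x \<in> S \<Longrightarrow> snd (F x) = k * snd x + t"
    and "x \<in> S" "y \<in> S"
  shows "rho (F x) (F y) = k * rho x y"
proof -
  have x: "x \<in> Xset" and y: "y \<in> Xset"
    using S(1) \<open>x \<in> S\<close> \<open>y \<in> S\<close> by auto
  let ?s = "tsup x y"
  have "?s \<in> S"
    using S(2)[OF \<open>x \<in> S\<close> tsup_in_Xset[OF x y] tle_tsup1[OF x y]] .
  have "is_sup (F x) (F y) (F ?s)"
    unfolding is_sup_def
  proof (intro conjI ballI impI)
    show "F ?s \<in> Xset"
      using F(1) \<open>?s \<in> S\<close> by auto
    show "tle (F x) (F ?s)" "tle (F y) (F ?s)"
      using order \<open>x \<in> S\<close> \<open>y \<in> S\<close> \<open>?s \<in> S\<close> tle_tsup1[OF x y] tle_tsup2[OF x y] by auto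
    fix w assume "w \<in> Xset" "tle (F x) w \<and> tle (F y) w"
    then obtain w' where "w' \<in> S" "w = F w'"
      using F(2)[OF \<open>x \<in> S\<close>] by blast
    have "w' \<in> Xset"
      using S(1) \<open>w' \<in> S\<close> by auto
    have "tle x w'" "tle y w'"
      using order[OF \<open>x \<in> S\<close> \<open>w' \<in> S\<close>] order[OF \<open>y \<in> S\<close> \<open>w' \<in> S\<close>]
        \<open>tle (F x) w \<and> tle (F y) w\<close> \<open>w = F w'\<close> by auto
    then have "tle ?s w'"
      using tsup_least[OF x y \<open>w' \<in> Xset\<close>] by blast
    then show "tle (F ?s) w"
      using order \<open>?s \<in> S\<close> \<open>w' \<in> S\<close> \<open>w = F w'\<close> by auto
  qed
  moreover have Fx: "F x \<in> Xset" and Fy: "F y \<in> Xset"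
    using F(1) \<open>x \<in> S\<close> \<open>y \<in> S\<close> by auto
  ultimately have "tsup (F x) (F y) = F ?s"
    using tsup_eq_iff_is_sup by blast
  then have "rho (F x) (F y) = 2 * snd (F ?s) - snd (F x) - snd (F y)"
    using rho_eq_tsup[OF Fx Fy] by simp
  also have "\<dots> = k * (2 * snd ?s - snd x - snd y)"
    using level \<open>x \<in> S\<close> \<open>y \<in> S\<close> \<open>?s \<in> S\<close> by (simp add: algebra_simps)
  also have "\<dots> = k * rho x y"
    using rho_eq_tsup[OF x y] by simp
  finally show ?thesis .
qed

definition reparam :: "real \<Rightarrow> real \<Rightarrow> ('g::zero) pt \<Rightarrow> 'g pt" where
  "reparam k t p = ((\<lambda>x. fst p ((x - t) / k)), k * snd p + t)"

lemma snd_reparam [simp]: "snd (reparam k t p) = k * snd p + t"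
  by (simp add: reparam_def)

lemma reparam_in_Xset:
  assumes "p \<in> Xset" "k > 0" "0 < k * snd p + t"
  shows "reparam k t p \<in> Xset"
proof -
  have "fst p ((x - t) / k) = 0" if "x \<le> k * snd p + t" for x
    using that \<open>k > 0\<close> Xset_zero_below[OF assms(1)] by (simp add: field_simps)
  then show ?thesis
    using assms left_locally_constant_affine[OF Xset_left_locally_constant[OF assms(1)]]
      eventually_zero_affine[OF Xset_eventually_zero[OF assms(1)]]
    by (simp add: reparam_def Xset_iff)
qed

lemma reparam_inverse:
  assumes "k > 0"
  shows "reparam (1 / k) (- t / k) (reparam k t p) = p"
    and "reparam k t (reparam (1 / k) (- t / k) p) = p"
  using assms by (simp_all add: reparam_def field_simps)

lemma tle_reparam_iff:
  assumes "k > 0"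
  shows "tle (reparam k t p) (reparam k t q) \<longleftrightarrow> tle p q"
proof -
  have "(\<forall>x>k * snd q + t. fst p ((x - t) / k) = fst q ((x - t) / k)) \<longleftrightarrow>
      (\<forall>z>snd q. fst p z = fst q z)"
  proof
    assume agree: "\<forall>x>k * snd q + t. fst p ((x - t) / k) = fst q ((x - t) / k)"
    show "\<forall>z>snd q. fst p z = fst q z"
    proof (intro allI impI)
      fix z assume "snd q < z"
      then have "k * snd q + t < k * z + t"
        using \<open>k > 0\<close> by simp
      then have "fst p ((k * z + t - t) / k) = fst q ((k * z + t - t) / k)"
        using agree by blast
      then show "fst p z = fst q z"
        using \<open>k > 0\<close> by simp
    qed
  next
    assume "\<forall>z>snd q. fst p z = fst q z"
    moreover have "snd q < (x - t) / k" if "k * snd q + t < x" for x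
      using that \<open>k > 0\<close> by (simp add: field_simps)
    ultimately show "\<forall>x>k * snd q + t. fst p ((x - t) / k) = fst q ((x - t) / k)"
      by blast
  qed
  then show ?thesis
    using \<open>k > 0\<close> by (simp add: tle_def reparam_def)
qed

lemma rho_reparam:
  assumes "k > 0" "x \<in> Xset" "y \<in> Xset" "0 < k * snd x + t" "0 < k * snd y + t"
  shows "rho (reparam k t x) (reparam k t y) = k * rho x y"
proof (rule rho_image_of_order_embedding[where S = "{p \<in> Xset. 0 < k * snd p + t}"])
  fix p w assume p: "p \<in> {p \<in> Xset. 0 < k * snd p + t}" and "w \<in> Xset" "tle (reparam k t p) w"
  define w' where "w' = reparam (1 / k) (- t / k) w"
  have "0 < k * snd p"
    using \<open>k > 0\<close> Xset_snd_pos[of p] p by simp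
  moreover have "k * snd p + t \<le> snd w"
    using tle_snd_le[OF \<open>tle (reparam k t p) w\<close>] by simp
  moreover have "snd w' = (snd w - t) / k"
    unfolding w'_def by (simp add: diff_divide_distrib)
  ultimately have "0 < snd w'"
    using \<open>k > 0\<close> by simp
  then have "w' \<in> Xset"
    unfolding w'_def using \<open>k > 0\<close> reparam_in_Xset[OF \<open>w \<in> Xset\<close>] by simp
  moreover have "k * snd w' + t = snd w"
    using \<open>snd w' = (snd w - t) / k\<close> \<open>k > 0\<close> by simp
  ultimately have w': "w' \<in> {p \<in> Xset. 0 < k * snd p + t}"
    using Xset_snd_pos[OF \<open>w \<in> Xset\<close>] by simp
  have "w = reparam k t w'"
    unfolding w'_def by (rule reparam_inverse(2)[OF \<open>k > 0\<close>, symmetric])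
  then show "w \<in> reparam k t ` {p \<in> Xset. 0 < k * snd p + t}"
    using w' by (rule image_eqI)
next
  fix p w assume "p \<in> {p \<in> Xset. 0 < k * snd p + t}" "w \<in> Xset" "tle p w"
  moreover have "k * snd p \<le> k * snd w"
    using \<open>k > 0\<close> tle_snd_le[OF \<open>tle p w\<close>] by simp
  ultimately show "w \<in> {p \<in> Xset. 0 < k * snd p + t}"
    by simp
next
  show "reparam k t ` {p \<in> Xset. 0 < k * snd p + t} \<subseteq> Xset"
    using reparam_in_Xset \<open>k > 0\<close> by blast
next
  show "tle (reparam k t p) (reparam k t q) \<longleftrightarrow> tle p q" for p q
    using tle_reparam_iff[OF \<open>k > 0\<close>] .
next
  show "snd (reparam k t p) = k * snd p + t" for p
    by simp
qed (use assms in auto)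

definition translate :: "(real \<Rightarrow> 'g) \<Rightarrow> ('g::ab_group_add) pt \<Rightarrow> 'g pt" where
  "translate \<phi> p = ((\<lambda>x. if snd p < x then fst p x + \<phi> x else 0), snd p)"

lemma snd_translate [simp]: "snd (translate \<phi> p) = snd p"
  by (simp add: translate_def)

lemma translate_in_Xset:
  assumes "p \<in> Xset" "left_locally_constant \<phi>" "\<forall>\<^sub>F x in at_top. \<phi> x = 0"
  shows "translate \<phi> p \<in> Xset"
proof -
  have "left_locally_constant (\<lambda>x. fst p x + \<phi> x)"
    using left_locally_constant_combine[OF Xset_left_locally_constant[OF assms(1)] assms(2)] .
  then have "left_locally_constant (\<lambda>x. if snd p < x then fst p x + \<phi> x else 0)"
    by (rule left_locally_constant_truncate)
  moreover have "\<forall>\<^sub>F x in at_top. (if snd p < x then fst p x + \<phi> x else 0) = 0"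
    using Xset_eventually_zero[OF assms(1)] assms(3) by eventually_elim simp
  ultimately show ?thesis
    using Xset_snd_pos[OF assms(1)] by (simp add: translate_def Xset_iff)
qed

lemma translate_uminus:
  assumes "p \<in> Xset"
  shows "translate (\<lambda>x. - \<phi> x) (translate \<phi> p) = p"
proof -
  have "fst (translate (\<lambda>x. - \<phi> x) (translate \<phi> p)) x = fst p x" for x
    using Xset_zero_below[OF assms, of x] by (cases "snd p < x") (simp_all add: translate_def)
  then show ?thesis
    by (simp add: prod_eq_iff fun_eq_iff)
qed

lemma tle_translate_iff: "tle (translate \<phi> p) (translate \<phi> q) \<longleftrightarrow> tle p q"
proof (cases "snd p \<le> snd q")
  case True
  then have "(if snd p < x then fst p x + \<phi> x else 0) = (if snd q < x then fst q x + \<phi> x else 0)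
      \<longleftrightarrow> fst p x = fst q x" if "snd q < x" for x
    using that by simp
  then show ?thesis
    using True by (simp add: tle_def translate_def)
qed (simp add: tle_def)

lemma bij_betw_reparam:
  assumes "k > 0"
  shows "bij_betw (reparam k 0) Xset Xset"
proof (rule bij_betw_byWitness[where f' = "reparam (1 / k) 0"])
  show "\<forall>p\<in>Xset. reparam (1 / k) 0 (reparam k 0 p) = p"
    using reparam_inverse(1)[OF assms, of 0, simplified] by blast
  show "\<forall>p\<in>Xset. reparam k 0 (reparam (1 / k) 0 p) = p"
    using reparam_inverse(2)[OF assms, of 0, simplified] by blast
  have scaled: "reparam c 0 p \<in> Xset" if "p \<in> Xset" "c > 0" for p c
    using reparam_in_Xset[OF that, of 0] Xset_snd_pos[OF that(1)] that(2) by simp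
  show "reparam k 0 ` Xset \<subseteq> Xset"
    using assms by (blast intro: scaled)
  show "reparam (1 / k) 0 ` Xset \<subseteq> Xset"
    using assms scaled[of _ "1 / k"] by auto
qed

lemma left_locally_constant_uminus:
  "left_locally_constant \<phi> \<Longrightarrow> left_locally_constant (\<lambda>x. - \<phi> x)"
  using left_locally_constant_combine[of \<phi> \<phi> "\<lambda>a _. - a"] by simp

lemma bij_betw_translate:
  assumes "left_locally_constant \<phi>" "\<forall>\<^sub>F x in at_top. \<phi> x = 0"
  shows "bij_betw (translate \<phi>) Xset Xset"
proof (rule bij_betw_byWitness[where f' = "translate (\<lambda>x. - \<phi> x)"])
  show "translate \<phi> ` Xset \<subseteq> Xset"
    using translate_in_Xset[OF _ assms] by blast
  have "\<forall>\<^sub>F x in at_top. - \<phi> x = 0"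
    using assms(2) by eventually_elim simp
  then show "translate (\<lambda>x. - \<phi> x) ` Xset \<subseteq> Xset"
    using translate_in_Xset[OF _ left_locally_constant_uminus[OF assms(1)]] by blast
  show "\<forall>p\<in>Xset. translate (\<lambda>x. - \<phi> x) (translate \<phi> p) = p"
    using translate_uminus by blast
  show "\<forall>p\<in>Xset. translate \<phi> (translate (\<lambda>x. - \<phi> x) p) = p"
    using translate_uminus[of _ "\<lambda>x. - \<phi> x"] by simp
qed

lemma rho_translate:
  assumes "left_locally_constant \<phi>" "\<forall>\<^sub>F x in at_top. \<phi> x = 0" "x \<in> Xset" "y \<in> Xset"
  shows "rho (translate \<phi> x) (translate \<phi> y) = rho x y"
proof -
  have onto: "translate \<phi> ` Xset = Xset"
    using bij_betw_translate[OF assms(1,2)] by (rule bij_betw_imp_surj_on)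
  have "rho (translate \<phi> x) (translate \<phi> y) = 1 * rho x y"
    by (rule rho_image_of_order_embedding[where S = Xset and t = 0])
      (simp_all add: assms onto tle_translate_iff)
  then show ?thesis by simp
qed

lemma similarity_homogeneous_Xset: "similarity_homogeneous (Xset :: ('g::ab_group_add) pt set) rho"
  unfolding similarity_homogeneous_def
proof (intro ballI)
  fix p q :: "'g pt" assume p: "p \<in> Xset" and q: "q \<in> Xset"
  define k where "k = snd q / snd p"
  have "k > 0" "k * snd p = snd q"
    using Xset_snd_pos[OF p] Xset_snd_pos[OF q] by (simp_all add: k_def)
  define p' where "p' = reparam k 0 p"
  have p': "p' \<in> Xset" "snd p' = snd q"
    using reparam_in_Xset[OF p \<open>k > 0\<close>, of 0] Xset_snd_pos[OF q] \<open>k * snd p = snd q\<close>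
    by (simp_all add: p'_def)
  define \<phi> where "\<phi> = (\<lambda>x. fst q x - fst p' x)"
  have "left_locally_constant \<phi>"
    unfolding \<phi>_def
    using Xset_left_locally_constant[OF q] Xset_left_locally_constant[OF p'(1)]
    by (rule left_locally_constant_combine)
  moreover have "\<forall>\<^sub>F x in at_top. \<phi> x = 0"
    unfolding \<phi>_def using Xset_eventually_zero[OF q] Xset_eventually_zero[OF p'(1)]
    by eventually_elim simp
  ultimately have \<phi>: "left_locally_constant \<phi>" "\<forall>\<^sub>F x in at_top. \<phi> x = 0" .
  have "fst (translate \<phi> p') x = fst q x" for x
    using Xset_zero_below[OF q, of x] p'(2) by (simp add: translate_def \<phi>_def)
  then have "translate \<phi> p' = q"
    using p'(2) by (simp add: prod_eq_iff fun_eq_iff)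
  define F where "F = translate \<phi> \<circ> reparam k 0"
  have "bij_betw F Xset Xset"
    unfolding F_def using bij_betw_reparam[OF \<open>k > 0\<close>] bij_betw_translate[OF \<phi>]
    by (rule bij_betw_trans)
  moreover have "rho (F x) (F y) = k * rho x y" if "x \<in> Xset" "y \<in> Xset" for x y
  proof -
    have "reparam k 0 x \<in> Xset" "reparam k 0 y \<in> Xset"
      using bij_betw_apply[OF bij_betw_reparam[OF \<open>k > 0\<close>]] that by blast+
    then have "rho (F x) (F y) = rho (reparam k 0 x) (reparam k 0 y)"
      unfolding F_def using rho_translate[OF \<phi>] by simp
    also have "\<dots> = k * rho x y"
      using rho_reparam[OF \<open>k > 0\<close> that] Xset_snd_pos[OF that(1)] Xset_snd_pos[OF that(2)] \<open>k > 0\<close>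
      by simp
    finally show ?thesis .
  qed
  moreover have "F p = q"
    using \<open>translate \<phi> p' = q\<close> by (simp add: F_def p'_def)
  ultimately show "\<exists>F k. k > 0 \<and> bij_betw F Xset Xset \<and>
      (\<forall>x\<in>Xset. \<forall>y\<in>Xset. rho (F x) (F y) = k * rho x y) \<and> F p = q"
    using \<open>k > 0\<close> by blast
qed

lemma rho_lt_rho_add_snd_of_tle_tsup:
  assumes "u \<in> Xset" "v \<in> Xset" "p \<in> Xset" "tle (tsup u p) (tsup v p)"
  shows "rho u v < rho v p + snd p"
proof -
  have "rho u v \<le> 2 * snd (tsup v p) - snd u - snd v"
    using rho_le_common_upper_bound[OF assms(1,2) tsup_in_Xset[OF assms(2,3)]]
      tle_trans[OF tle_tsup1[OF assms(1,3)] assms(4)] tle_tsup1[OF assms(2,3)] by blast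
  then show ?thesis
    using rho_eq_tsup[OF assms(2,3)] Xset_snd_pos[OF assms(1)] by linarith
qed

lemma rho_lt_max_add_snd:
  assumes "u \<in> Xset" "v \<in> Xset" "p \<in> Xset"
  shows "rho u v < max (rho u p) (rho v p) + snd p"
proof (cases "snd (tsup u p) \<le> snd (tsup v p)")
  case True
  then have "tle (tsup u p) (tsup v p)"
    by (rule tle_of_common_lower_bound[OF tle_tsup2[OF assms(1,3)] tle_tsup2[OF assms(2,3)]])
  then show ?thesis
    using rho_lt_rho_add_snd_of_tle_tsup[OF assms] by linarith
next
  case False
  then have "tle (tsup v p) (tsup u p)"
    using tle_of_common_lower_bound[OF tle_tsup2[OF assms(2,3)] tle_tsup2[OF assms(1,3)]] by linarith
  then show ?thesis
    using rho_lt_rho_add_snd_of_tle_tsup[OF assms(2,1,3)] rho_commute[of u v] by linarith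
qed

lemma zero_function_in_Xset: "0 < a \<Longrightarrow> ((\<lambda>_. 0), a) \<in> Xset"
  by (simp add: Xset_iff left_locally_constant_def)

lemma not_homogeneous_Xset: "\<not> homogeneous (Xset :: ('g::ab_group_add) pt set) rho"
proof
  define z :: "real \<Rightarrow> 'g pt" where "z a = ((\<lambda>_. 0), a)" for a
  have z: "z a \<in> Xset" if "0 < a" for a
    unfolding z_def using that by (rule zero_function_in_Xset)
  have "rho (z a) (z b) = \<bar>snd (z a) - snd (z b)\<bar>" for a b
    by (rule rho_comparable) (auto simp: z_def tle_def)
  then have rho_z: "rho (z a) (z b) = \<bar>a - b\<bar>" for a b
    by (simp add: z_def)
  assume "homogeneous (Xset :: 'g pt set) rho"
  then have "\<exists>F. bij_betw F Xset Xset \<and> (\<forall>x\<in>Xset. \<forall>y\<in>Xset. rho (F x) (F y) = rho x y) \<and>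
      F (z 4) = z 2"
    using z[of 4] z[of 2] unfolding homogeneous_def by simp
  then obtain F where "bij_betw F Xset Xset" and iso: "\<forall>x\<in>Xset. \<forall>y\<in>Xset. rho (F x) (F y) = rho x y"
    and "F (z 4) = z 2"
    by blast
  have F_z: "F (z a) \<in> Xset" if "0 < a" for a
    using bij_betw_apply[OF \<open>bij_betw F Xset Xset\<close> z[OF that]] .
  have "rho (F (z 1)) (F (z 7)) < max (rho (F (z 1)) (F (z 4))) (rho (F (z 7)) (F (z 4))) + snd (z 2)"
    using rho_lt_max_add_snd[OF F_z F_z z, of 1 7 2] \<open>F (z 4) = z 2\<close> by simp
  then show False
    using iso z[of 1] z[of 4] z[of 7] by (simp add: rho_z z_def[of 2])
qed

lemma partition_on_level_sets:
  "partition_on (Xset :: ('g::ab_group_add) pt set) {{p \<in> Xset. snd p = a} | a. a > 0}"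
  unfolding partition_on_def disjoint_def
proof (intro conjI ballI impI)
  show "\<Union> {{p \<in> Xset. snd p = a} | a. a > 0} = (Xset :: 'g pt set)"
    using Xset_snd_pos by blast
  show "{} \<notin> {{p \<in> (Xset :: 'g pt set). snd p = a} | a. a > 0}"
    using zero_function_in_Xset by fastforce
  fix A B :: "'g pt set"
  assume "A \<in> {{p \<in> Xset. snd p = a} | a. a > 0}" "B \<in> {{p \<in> Xset. snd p = a} | a. a > 0}"
  then obtain a b where "A = {p \<in> Xset. snd p = a}" "B = {p \<in> Xset. snd p = b}"
    by blast
  moreover assume "A \<noteq> B"
  ultimately have "a \<noteq> b"
    by blast
  then show "A \<inter> B = {}"
    using \<open>A = {p \<in> Xset. snd p = a}\<close> \<open>B = {p \<in> Xset. snd p = b}\<close> by blast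
qed

lemma closedin_level_set:
  "closedin (Metric_space.mtopology Xset rho) {p \<in> (Xset :: ('g::ab_group_add) pt set). snd p = a}"
proof -
  interpret Metric_space "Xset :: 'g pt set" rho
    by (rule Metric_space_rho)
  show ?thesis
    unfolding closedin_metric
  proof (intro conjI allI impI)
    fix x :: "'g pt" assume x: "x \<in> Xset - {p \<in> Xset. snd p = a}"
    have "disjnt {p \<in> Xset. snd p = a} (mball x \<bar>snd x - a\<bar>)"
      using abs_snd_diff_le_rho x by (fastforce simp: disjnt_def)
    moreover have "0 < \<bar>snd x - a\<bar>"
      using x by simp
    ultimately show "\<exists>r>0. disjnt {p \<in> Xset. snd p = a} (mball x r)"
      by blast
  qed blast
qed

lemma isometric_level_sets:
  assumes "0 < a" "0 < b"
  shows "isometric_sets rho {p \<in> (Xset :: ('g::ab_group_add) pt set). snd p = a} {p \<in> Xset. snd p = b}"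
proof -
  let ?A = "{p \<in> (Xset :: 'g pt set). snd p = a}" and ?B = "{p \<in> (Xset :: 'g pt set). snd p = b}"
  have "bij_betw (reparam 1 (b - a)) ?A ?B"
  proof (rule bij_betw_byWitness[where f' = "reparam 1 (a - b)"])
    show "\<forall>p\<in>?A. reparam 1 (a - b) (reparam 1 (b - a) p) = p"
      "\<forall>p\<in>?B. reparam 1 (b - a) (reparam 1 (a - b) p) = p"
      by (simp_all add: reparam_def)
    have shift: "reparam 1 (c - d) p \<in> {p \<in> Xset. snd p = c}"
      if "p \<in> {p \<in> Xset. snd p = d}" "0 < c" for p :: "'g pt" and c d
      using reparam_in_Xset[of p 1 "c - d"] that by simp
    show "reparam 1 (b - a) ` ?A \<subseteq> ?B" "reparam 1 (a - b) ` ?B \<subseteq> ?A"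
      using shift assms by blast+
  qed
  moreover have "rho (reparam 1 (b - a) x) (reparam 1 (b - a) y) = rho x y" if "x \<in> ?A" "y \<in> ?A" for x y
    using rho_reparam[of 1 x y "b - a"] that assms by simp
  ultimately show ?thesis
    unfolding isometric_sets_def by blast
qed

lemma set_dist_level_sets:
  assumes "0 < a" "0 < b"
  shows "set_dist rho {p \<in> (Xset :: ('g::ab_group_add) pt set). snd p = a} {p \<in> Xset. snd p = b}
    = \<bar>a - b\<bar>"
proof -
  let ?D = "{rho x y | x y. x \<in> {p \<in> (Xset :: 'g pt set). snd p = a} \<and> y \<in> {p \<in> Xset. snd p = b}}"
  let ?z = "((\<lambda>_. 0), a) :: 'g pt"
  have "?z \<in> {p \<in> Xset. snd p = a}" "at_level b ?z \<in> {p \<in> Xset. snd p = b}"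
    using zero_function_in_Xset at_level_in_Xset assms by auto
  moreover have "\<bar>a - b\<bar> = rho ?z (at_level b ?z)"
    using rho_at_level[of ?z b] by simp
  ultimately have "\<bar>a - b\<bar> \<in> ?D"
    by blast
  moreover have "\<bar>a - b\<bar> \<le> d" if "d \<in> ?D" for d
  proof -
    obtain x y :: "'g pt" where "d = rho x y" "x \<in> Xset" "snd x = a" "y \<in> Xset" "snd y = b"
      using \<open>d \<in> ?D\<close> by blast
    then show ?thesis
      using abs_snd_diff_le_rho[of x y] by simp
  qed
  ultimately show ?thesis
    unfolding set_dist_def by (rule cInf_eq_minimum)
qed

lemma equidistant_level_sets:
  assumes "0 < a" "0 < b"
  shows "equidistant rho {p \<in> (Xset :: ('g::ab_group_add) pt set). snd p = a} {p \<in> Xset. snd p = b}"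
proof -
  have "\<exists>y\<in>{p \<in> Xset. snd p = c}. rho x y = \<bar>snd x - c\<bar>" if "x \<in> Xset" "0 < c" for x :: "'g pt" and c
    by (intro bexI[of _ "at_level c x"]) (simp_all add: rho_at_level at_level_in_Xset[OF that])
  then show ?thesis
    unfolding equidistant_def set_dist_level_sets[OF assms] using assms
    by (fastforce simp: abs_minus_commute)
qed

lemma metric_fibration_level_sets:
  "metric_fibration (Xset :: ('g::ab_group_add) pt set) rho {{p \<in> Xset. snd p = a} | a. a > 0}"
  unfolding metric_fibration_def
  using partition_on_level_sets closedin_level_set isometric_level_sets equidistant_level_sets
  by fastforce

theorem theorem4:
  shows "similarity_homogeneous (Xset :: ('g::ab_group_add) pt set) rho
       \<and> \<not> homogeneous (Xset :: 'g pt set) rho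
       \<and> metric_fibration (Xset :: 'g pt set) rho
           {{p \<in> (Xset :: 'g pt set). snd p = a} | a. a > 0}"
  using similarity_homogeneous_Xset not_homogeneous_Xset metric_fibration_level_sets by blast

end
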